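(* Fix an integer $k\ge -1$. For every $g\ge 4k+3$, \[\#\{S\in\mathcal{S}_g\mid m(S)=g-k\}=\sum_{\overline{x}\in\mathcal{Y}(k)}\binom{g-3k-2}{k+1-a(\overline{x})-2b(\overline{x})}.\]
   Context: A numerical semigroup $S$ is a submonoid of $\mathbb{N}_0$ with finite complement; its genus is the size of the complement and $m(S)$ is its smallest nonzero element. $\mathcal{S}_g$ is the set of numerical semigroups of genus $g$. For $\overline{x}=(x_1,\ldots,x_t)\in\{1,2,3\}^t$ let $a(\overline{x})=\#\{i: x_i=2\}$ and $b(\overline{x})=\#\{i: x_i=3\}$. For an integer $k\ge 0$, $\mathcal{Y}(k)$ is the set of tuples $\overline{x}=(x_1,\ldots,x_{2k+1})\in\{1,2,3\}^{2k+1}$ such that (i) whenever $i_1,i_2,i_3\in[1,2k+1]$ satisfy $i_1+i_2=i_3$, $(x_{i_1},x_{i_2},x_{i_3})\ne(1,1,3)$, and (ii) $a(\overline{x})+2b(\overline{x})\le k+1$; and $\mathcal{Y}(-1)=\{\emptyset\}$ consists of the empty tuple (with $a=b=0$). *)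

theory Defs
  imports Main
begin

definition numerical_semigroup :: "nat set \<Rightarrow> bool" where
  "numerical_semigroup S \<longleftrightarrow>
     0 \<in> S \<and> (\<forall>x\<in>S. \<forall>y\<in>S. x + y \<in> S) \<and> finite (UNIV - S)"

definition genus :: "nat set \<Rightarrow> nat" where
  "genus S = card (UNIV - S)"

definition multiplicity_ns :: "nat set \<Rightarrow> nat" where
  "multiplicity_ns S = (LEAST x. x \<in> S \<and> x \<noteq> 0)"

definition semigroups_of_genus :: "nat \<Rightarrow> nat set set" where
  "semigroups_of_genus g = {S. numerical_semigroup S \<and> genus S = g}"

text \<open>Tuples are lists; the paper's entry x_i (1-based) is xs ! (i - 1).\<close>
definition a_cnt :: "nat list \<Rightarrow> nat" where
  "a_cnt xs = length (filter (\<lambda>x. x = 2) xs)"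

definition b_cnt :: "nat list \<Rightarrow> nat" where
  "b_cnt xs = length (filter (\<lambda>x. x = 3) xs)"

definition Y_set :: "int \<Rightarrow> nat list set" where
  "Y_set k = (if k = -1 then {[]} else
     {xs. int (length xs) = 2 * k + 1 \<and> set xs \<subseteq> {1, 2, 3} \<and>
          (\<forall>i1\<in>{1..length xs}. \<forall>i2\<in>{1..length xs}. \<forall>i3\<in>{1..length xs}.
             i1 + i2 = i3 \<longrightarrow> (xs ! (i1 - 1), xs ! (i2 - 1), xs ! (i3 - 1)) \<noteq> (1, 1, 3)) \<and>
          int (a_cnt xs + 2 * b_cnt xs) \<le> k + 1})"

end

theory Submission
  imports Defs
begin

text \<open>
A numerical semigroup \<open>S\<close> of multiplicity \<open>m\<close> is determined by its Kunz coordinates: for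
\<open>0 < i < m\<close>, \<open>c i\<close> is the least \<open>q\<close> with \<open>q * m + i \<in> S\<close>. They are positive, sum to the genus,
and satisfy \<open>c (i + j) \<le> c i + c j\<close> for \<open>i + j < m\<close> and \<open>c (i + j - m) \<le> c i + c j + 1\<close> for
\<open>i + j > m\<close>; conversely every such vector comes from a semigroup. For \<open>m = g - k\<close> the excess
\<open>\<Sum>(c i - 1)\<close> is only \<open>K = k + 1\<close>, and pairing \<open>c l\<close> with the sums \<open>c j + c (l - j)\<close> and
\<open>c j + c (m + l - j)\<close> shows that all \<open>c i \<le> 3\<close> and that \<open>c i \<le> 2\<close> beyond \<open>L = 2k + 1\<close>.
So a Kunz vector is the same as its prefix \<open>(c 1, \<dots>, c L)\<close>, a tuple in \<open>\<Y>(k)\<close> (the Kunz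
inequalities reduce to forbidding the pattern \<open>(1, 1, 3)\<close>), together with the set of the
\<open>m - L - 1 = g - 3k - 2\<close> remaining positions carrying a \<open>2\<close>, which has \<open>K - a - 2b\<close> elements.
\<close>

section \<open>Numerical semigroups and their Kunz coordinates\<close>

lemma numerical_semigroup_add:
  "numerical_semigroup S \<Longrightarrow> x \<in> S \<Longrightarrow> y \<in> S \<Longrightarrow> x + y \<in> S"
  by (simp add: numerical_semigroup_def)

lemma numerical_semigroup_eventually_mem:
  assumes "numerical_semigroup S"
  obtains B where "\<And>n. B < n \<Longrightarrow> n \<in> S"
proof -
  obtain B where "\<forall>n\<in>UNIV - S. n \<le> B"
    using assms unfolding numerical_semigroup_def finite_nat_set_iff_bounded_le by blast
  then show thesis using that by (meson DiffI UNIV_I not_le)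
qed

lemma numerical_semigroup_multiplicity:
  assumes "numerical_semigroup S"
  shows "multiplicity_ns S \<in> S" "0 < multiplicity_ns S"
proof -
  obtain B where "\<And>n. B < n \<Longrightarrow> n \<in> S" using numerical_semigroup_eventually_mem[OF assms] by blast
  then have "Suc B \<in> S \<and> Suc B \<noteq> 0" by simp
  then have "multiplicity_ns S \<in> S \<and> multiplicity_ns S \<noteq> 0"
    unfolding multiplicity_ns_def by (rule LeastI)
  then show "multiplicity_ns S \<in> S" "0 < multiplicity_ns S" by auto
qed

lemma not_mem_below_multiplicity_ns: "0 < n \<Longrightarrow> n < multiplicity_ns S \<Longrightarrow> n \<notin> S"
  unfolding multiplicity_ns_def using not_less_Least by blast

lemma numerical_semigroup_mult_mem:
  assumes "numerical_semigroup S" "m \<in> S"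
  shows "q * m \<in> S"
proof (induction q)
  case 0
  then show ?case using assms(1) by (simp add: numerical_semigroup_def)
next
  case (Suc q)
  then show ?case using numerical_semigroup_add[OF assms] by simp
qed

lemma numerical_semigroup_residue_mem:
  assumes "numerical_semigroup S" "0 < m"
  shows "\<exists>q. q * m + i \<in> S"
proof -
  obtain B where B: "\<And>n. B < n \<Longrightarrow> n \<in> S"
    using numerical_semigroup_eventually_mem[OF assms(1)] by blast
  have "Suc B * 1 \<le> Suc B * m" using assms(2) by (intro mult_le_mono2) simp
  then have "B < Suc B * m + i" by simp
  then show ?thesis using B by blast
qed

definition kunz_semigroup :: "nat \<Rightarrow> (nat \<Rightarrow> nat) \<Rightarrow> nat set" where
  "kunz_semigroup m c = {n. n mod m = 0 \<or> c (n mod m) \<le> n div m}"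

definition kunz_vectors :: "nat \<Rightarrow> nat \<Rightarrow> (nat \<Rightarrow> nat) set" where
  "kunz_vectors m g = {c. (\<forall>i. (i = 0 \<or> m \<le> i) \<longrightarrow> c i = 0) \<and> (\<forall>i. 1 \<le> i \<and> i < m \<longrightarrow> 1 \<le> c i)
     \<and> (\<forall>i j. 1 \<le> i \<longrightarrow> 1 \<le> j \<longrightarrow> i + j < m \<longrightarrow> c (i + j) \<le> c i + c j)
     \<and> (\<forall>i j. i < m \<longrightarrow> j < m \<longrightarrow> m < i + j \<longrightarrow> c (i + j - m) \<le> c i + c j + 1)
     \<and> (\<Sum>i\<in>{1..<m}. c i) = g}"

definition kunz_coords :: "nat set \<Rightarrow> nat \<Rightarrow> nat \<Rightarrow> nat" where
  "kunz_coords S m i = (if 1 \<le> i \<and> i < m then LEAST q. q * m + i \<in> S else 0)"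

lemma kunz_vectorsD:
  assumes "c \<in> kunz_vectors m g"
  shows "\<And>i. i = 0 \<or> m \<le> i \<Longrightarrow> c i = 0"
    and "\<And>i. 1 \<le> i \<Longrightarrow> i < m \<Longrightarrow> 1 \<le> c i"
    and "\<And>i j. 1 \<le> i \<Longrightarrow> 1 \<le> j \<Longrightarrow> i + j < m \<Longrightarrow> c (i + j) \<le> c i + c j"
    and "\<And>i j. i < m \<Longrightarrow> j < m \<Longrightarrow> m < i + j \<Longrightarrow> c (i + j - m) \<le> c i + c j + 1"
    and "(\<Sum>i\<in>{1..<m}. c i) = g"
  using assms unfolding kunz_vectors_def by (simp_all only: mem_Collect_eq)

lemma mem_kunz_semigroup_iff:
  "i < m \<Longrightarrow> q * m + i \<in> kunz_semigroup m c \<longleftrightarrow> i = 0 \<or> c i \<le> q"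
  by (simp add: kunz_semigroup_def)

lemma mult_mem_kunz_semigroup: "q * m \<in> kunz_semigroup m c"
  by (simp add: kunz_semigroup_def)

lemma compl_kunz_semigroup:
  assumes "0 < m"
  shows "UNIV - kunz_semigroup m c = (\<lambda>(i, q). q * m + i) ` (SIGMA i:{1..<m}. {..<c i})"
proof (intro set_eqI iffI)
  fix n assume "n \<in> UNIV - kunz_semigroup m c"
  then have "(n mod m, n div m) \<in> (SIGMA i:{1..<m}. {..<c i})"
    using assms by (auto simp: kunz_semigroup_def)
  then show "n \<in> (\<lambda>(i, q). q * m + i) ` (SIGMA i:{1..<m}. {..<c i})"
    by (rule rev_image_eqI) simp
qed (auto simp: mem_kunz_semigroup_iff)

lemma card_compl_kunz_semigroup:
  assumes "0 < m"
  shows "finite (UNIV - kunz_semigroup m c)" "card (UNIV - kunz_semigroup m c) = (\<Sum>i\<in>{1..<m}. c i)"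
proof -
  have "inj_on (\<lambda>(i, q). q * m + i) (SIGMA i:{1..<m}. {..<c i})"
  proof (rule inj_onI, clarsimp)
    fix i q i' q' assume "q * m + i = q' * m + i'" "i < m" "i' < m"
    then have "(q * m + i) mod m = (q' * m + i') mod m" "(q * m + i) div m = (q' * m + i') div m"
      by simp_all
    with \<open>i < m\<close> \<open>i' < m\<close> show "i = i' \<and> q = q'" by simp
  qed
  then show "card (UNIV - kunz_semigroup m c) = (\<Sum>i\<in>{1..<m}. c i)"
    by (simp add: compl_kunz_semigroup[OF assms] card_image)
  show "finite (UNIV - kunz_semigroup m c)"
    by (simp add: compl_kunz_semigroup[OF assms])
qed

lemma kunz_semigroup_add_closed:
  assumes c: "c \<in> kunz_vectors m g" and "0 < m"
    and "x \<in> kunz_semigroup m c" "y \<in> kunz_semigroup m c"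
  shows "x + y \<in> kunz_semigroup m c"
proof -
  define q i r j where "q = x div m" "i = x mod m" "r = y div m" "j = y mod m"
  have x: "x = q * m + i" "i < m" and y: "y = r * m + j" "j < m"
    using \<open>0 < m\<close> by (simp_all add: q_i_r_j_def)
  have ci: "i = 0 \<or> c i \<le> q" and cj: "j = 0 \<or> c j \<le> r"
    using assms(3,4) x y by (simp_all add: mem_kunz_semigroup_iff)
  have xy: "x + y = (q + r) * m + (i + j)" using x y by (simp add: algebra_simps)
  consider (zero) "i = 0 \<or> j = 0" | (below) "1 \<le> i" "1 \<le> j" "i + j < m" | (exact) "i + j = m"
    | (wrap) "1 \<le> i" "1 \<le> j" "m < i + j"
    by linarith
  then show ?thesis
  proof cases
    case zero
    then show ?thesis
      using ci cj x(2) y(2) xy by (auto simp: mem_kunz_semigroup_iff mult_mem_kunz_semigroup)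
  next
    case below
    then have "c (i + j) \<le> q + r" using kunz_vectorsD(3)[OF c] ci cj by fastforce
    then show ?thesis using below xy by (simp add: mem_kunz_semigroup_iff)
  next
    case exact
    then have "x + y = (q + r + 1) * m" using xy by simp
    then show ?thesis by (metis mult_mem_kunz_semigroup)
  next
    case wrap
    then have "c (i + j - m) \<le> q + r + 1"
      using kunz_vectorsD(4)[OF c x(2) y(2)] ci cj by fastforce
    moreover have "x + y = (q + r + 1) * m + (i + j - m)" using xy wrap by simp
    moreover have "i + j - m < m" using x(2) y(2) by linarith
    ultimately show ?thesis by (metis mem_kunz_semigroup_iff)
  qed
qed

lemma kunz_semigroup_in_semigroups_of_genus:
  assumes "c \<in> kunz_vectors m g" "0 < m"
  shows "kunz_semigroup m c \<in> semigroups_of_genus g"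
  using kunz_semigroup_add_closed[OF assms] card_compl_kunz_semigroup[OF assms(2)]
    kunz_vectorsD(5)[OF assms(1)]
  by (auto simp: semigroups_of_genus_def numerical_semigroup_def genus_def kunz_semigroup_def)

lemma multiplicity_kunz_semigroup:
  assumes "c \<in> kunz_vectors m g" "0 < m"
  shows "multiplicity_ns (kunz_semigroup m c) = m"
  unfolding multiplicity_ns_def
proof (rule Least_equality)
  show "m \<in> kunz_semigroup m c \<and> m \<noteq> 0" using assms(2) by (simp add: kunz_semigroup_def)
next
  fix y assume y: "y \<in> kunz_semigroup m c \<and> y \<noteq> 0"
  show "m \<le> y"
  proof (rule ccontr)
    assume "\<not> m \<le> y"
    then show False using y kunz_vectorsD(2)[OF assms(1), of y] by (simp add: kunz_semigroup_def)
  qed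
qed

lemma inj_on_kunz_semigroup: "inj_on (kunz_semigroup m) (kunz_vectors m g)"
proof (rule inj_onI)
  fix c d assume c: "c \<in> kunz_vectors m g" and d: "d \<in> kunz_vectors m g"
    and eq: "kunz_semigroup m c = kunz_semigroup m d"
  have le: "c i \<le> d i" if "kunz_semigroup m c = kunz_semigroup m d" "1 \<le> i" "i < m"
    for c d :: "nat \<Rightarrow> nat" and i
    using that mem_kunz_semigroup_iff[of i m "d i" c] mem_kunz_semigroup_iff[of i m "d i" d] by simp
  show "c = d"
  proof
    fix i
    show "c i = d i"
    proof (cases "1 \<le> i \<and> i < m")
      case True
      then show ?thesis using le[OF eq] le[OF eq[symmetric]] by (meson antisym)
    next
      case False
      then have "i = 0 \<or> m \<le> i" by linarith
      then show ?thesis using kunz_vectorsD(1)[OF c] kunz_vectorsD(1)[OF d] by simp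
    qed
  qed
qed

lemma kunz_coords_mem:
  assumes "numerical_semigroup S" "0 < m" "1 \<le> i" "i < m"
  shows "kunz_coords S m i * m + i \<in> S"
  using LeastI_ex[OF numerical_semigroup_residue_mem[OF assms(1,2)]] assms(3,4)
  by (simp add: kunz_coords_def)

lemma kunz_coords_le: "1 \<le> i \<Longrightarrow> i < m \<Longrightarrow> q * m + i \<in> S \<Longrightarrow> kunz_coords S m i \<le> q"
  by (simp add: kunz_coords_def Least_le)

lemma kunz_coords_pos:
  assumes S: "numerical_semigroup S" and m: "m = multiplicity_ns S" and i: "1 \<le> i" "i < m"
  shows "1 \<le> kunz_coords S m i"
proof (rule ccontr)
  assume "\<not> 1 \<le> kunz_coords S m i"
  then have "kunz_coords S m i = 0" by simp
  then have "i \<in> S"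
    using kunz_coords_mem[OF S _ i] numerical_semigroup_multiplicity(2)[OF S] m by simp
  then show False using not_mem_below_multiplicity_ns[of i S] i m by simp
qed

lemma kunz_semigroup_kunz_coords:
  assumes S: "numerical_semigroup S" and "m \<in> S" "0 < m"
  shows "kunz_semigroup m (kunz_coords S m) = S"
proof (rule set_eqI)
  fix n
  define q i where "q = n div m" "i = n mod m"
  have n: "n = q * m + i" "i < m" using \<open>0 < m\<close> by (simp_all add: q_i_def)
  show "n \<in> kunz_semigroup m (kunz_coords S m) \<longleftrightarrow> n \<in> S"
  proof (cases "i = 0")
    case True
    then show ?thesis using n numerical_semigroup_mult_mem[OF S \<open>m \<in> S\<close>]
      by (simp add: mult_mem_kunz_semigroup)
  next
    case False
    let ?c = "kunz_coords S m i"
    have "n \<in> S \<longleftrightarrow> ?c \<le> q"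
    proof
      assume "n \<in> S"
      then show "?c \<le> q" using kunz_coords_le n False by simp
    next
      assume "?c \<le> q"
      then have "n = (?c * m + i) + (q - ?c) * m" using n by (simp add: algebra_simps)
      also have "\<dots> \<in> S"
        using False n(2) kunz_coords_mem[OF S \<open>0 < m\<close>] numerical_semigroup_mult_mem[OF S \<open>m \<in> S\<close>]
        by (simp add: numerical_semigroup_add[OF S])
      finally show "n \<in> S" .
    qed
    then show ?thesis using n False by (simp add: mem_kunz_semigroup_iff)
  qed
qed

lemma kunz_coords_in_kunz_vectors:
  assumes S: "numerical_semigroup S" and m: "m = multiplicity_ns S"
  shows "kunz_coords S m \<in> kunz_vectors m (genus S)"
proof -
  have "m \<in> S" "0 < m" using numerical_semigroup_multiplicity[OF S] m by simp_all
  let ?c = "kunz_coords S m"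
  have sum_mem: "(?c i + ?c j) * m + (i + j) \<in> S" if "1 \<le> i" "i < m" "1 \<le> j" "j < m" for i j
  proof -
    have "(?c i + ?c j) * m + (i + j) = (?c i * m + i) + (?c j * m + j)" by (simp add: algebra_simps)
    also have "\<dots> \<in> S"
      using that by (intro numerical_semigroup_add[OF S] kunz_coords_mem[OF S \<open>0 < m\<close>])
    finally show ?thesis .
  qed
  show ?thesis
    unfolding kunz_vectors_def
  proof (intro CollectI conjI allI impI)
    fix i assume "i = 0 \<or> m \<le> i"
    then show "?c i = 0" by (auto simp: kunz_coords_def)
  next
    fix i assume "1 \<le> i \<and> i < m"
    then show "1 \<le> ?c i" using kunz_coords_pos[OF S m] by simp
  next
    fix i j :: nat assume "1 \<le> i" "1 \<le> j" "i + j < m"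
    then show "?c (i + j) \<le> ?c i + ?c j" using sum_mem[of i j] kunz_coords_le by simp
  next
    fix i j :: nat assume ij: "i < m" "j < m" "m < i + j"
    have "(?c i + ?c j) * m + (i + j) = (?c i + ?c j + 1) * m + (i + j - m)"
      using ij by simp
    then show "?c (i + j - m) \<le> ?c i + ?c j + 1"
      using ij sum_mem[of i j] kunz_coords_le[of "i + j - m" m] by simp
  next
    show "(\<Sum>i\<in>{1..<m}. ?c i) = genus S"
      using card_compl_kunz_semigroup(2)[OF \<open>0 < m\<close>, of ?c]
      by (simp add: genus_def kunz_semigroup_kunz_coords[OF S \<open>m \<in> S\<close> \<open>0 < m\<close>])
  qed
qed

lemma card_semigroups_with_multiplicity:
  assumes "0 < m"
  shows "card {S \<in> semigroups_of_genus g. multiplicity_ns S = m} = card (kunz_vectors m g)"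
proof -
  have "bij_betw (kunz_semigroup m) (kunz_vectors m g)
      {S \<in> semigroups_of_genus g. multiplicity_ns S = m}"
  proof (rule bij_betw_imageI)
    show "inj_on (kunz_semigroup m) (kunz_vectors m g)" by (rule inj_on_kunz_semigroup)
    show "kunz_semigroup m ` kunz_vectors m g = {S \<in> semigroups_of_genus g. multiplicity_ns S = m}"
    proof (intro set_eqI iffI)
      fix S assume "S \<in> kunz_semigroup m ` kunz_vectors m g"
      then show "S \<in> {S \<in> semigroups_of_genus g. multiplicity_ns S = m}"
        using assms kunz_semigroup_in_semigroups_of_genus multiplicity_kunz_semigroup by auto
    next
      fix S assume "S \<in> {S \<in> semigroups_of_genus g. multiplicity_ns S = m}"
      then have S: "numerical_semigroup S" "genus S = g" "multiplicity_ns S = m"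
        by (simp_all add: semigroups_of_genus_def)
      then have "m \<in> S" using numerical_semigroup_multiplicity(1) by blast
      then have "S = kunz_semigroup m (kunz_coords S m)"
        using kunz_semigroup_kunz_coords[OF S(1) _ assms] by simp
      moreover have "kunz_coords S m \<in> kunz_vectors m g"
        using kunz_coords_in_kunz_vectors[OF S(1)] S by simp
      ultimately show "S \<in> kunz_semigroup m ` kunz_vectors m g" by blast
    qed
  qed
  then show ?thesis by (simp add: bij_betw_same_card)
qed

section \<open>Kunz vectors of small excess are bounded by 3\<close>

lemma card_le_sum_kunz_vector:
  assumes "c \<in> kunz_vectors m g" "A \<subseteq> {1..<m}"
  shows "card A \<le> sum c A"
proof -
  have "card A = (\<Sum>i\<in>A. 1)" by (rule card_eq_sum)
  also have "\<dots> \<le> sum c A" using assms kunz_vectorsD(2)[OF assms(1)] by (intro sum_mono) auto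
  finally show ?thesis .
qed

lemma kunz_vector_subadditive_bound:
  assumes c: "c \<in> kunz_vectors m g" and "l < m"
  shows "c l * (l - 1) \<le> 2 * (\<Sum>j\<in>{1..<l}. c j)"
proof -
  have "c l * (l - 1) = (\<Sum>j\<in>{1..<l}. c l)" by simp
  also have "\<dots> \<le> (\<Sum>j\<in>{1..<l}. c j + c (l - j))"
  proof (rule sum_mono)
    fix j assume "j \<in> {1..<l}"
    then show "c l \<le> c j + c (l - j)" using kunz_vectorsD(3)[OF c, of j "l - j"] \<open>l < m\<close> by auto
  qed
  also have "\<dots> = 2 * (\<Sum>j\<in>{1..<l}. c j)"
    using sum.atLeastLessThan_rev[of c 1 l] by (simp add: sum.distrib)
  finally show ?thesis .
qed

lemma kunz_vector_wraparound_bound: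
  assumes c: "c \<in> kunz_vectors m g" and "0 < l" "l < m"
  shows "(c l - 1) * (m - Suc l) \<le> 2 * (\<Sum>j\<in>{Suc l..<m}. c j)"
proof -
  have "(c l - 1) * (m - Suc l) = (\<Sum>j\<in>{Suc l..<m}. c l - 1)" by simp
  also have "\<dots> \<le> (\<Sum>j\<in>{Suc l..<m}. c j + c (m + l - j))"
  proof (rule sum_mono)
    fix j assume j: "j \<in> {Suc l..<m}"
    then have "m + l - j < m" by auto
    then show "c l - 1 \<le> c j + c (m + l - j)"
      using kunz_vectorsD(4)[OF c, of j "m + l - j"] j \<open>0 < l\<close> by auto
  qed
  also have "\<dots> = 2 * (\<Sum>j\<in>{Suc l..<m}. c j)"
    using sum.atLeastLessThan_rev[of c "Suc l" m] by (simp add: sum.distrib)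
  finally show ?thesis .
qed

lemma sum_split_at:
  fixes c :: "nat \<Rightarrow> 'a::comm_monoid_add"
  assumes "1 \<le> l" "l < m"
  shows "sum c {1..<m} = sum c {1..<l} + c l + sum c {Suc l..<m}"
proof -
  have "sum c {1..<m} = sum c {1..<l} + sum c {l..<m}"
    using assms by (intro sum.atLeastLessThan_concat[symmetric]) auto
  also have "sum c {l..<m} = c l + sum c {Suc l..<m}"
    using assms by (intro sum.atLeast_Suc_lessThan) auto
  finally show ?thesis by (simp add: add.assoc)
qed

lemma kunz_vector_le_2:
  assumes c: "c \<in> kunz_vectors m g" and "g + 1 = m + K" "2 * K \<le> l" "l < m"
  shows "c l \<le> 2"
proof (rule ccontr)
  assume "\<not> c l \<le> 2"
  then have "1 \<le> l" using kunz_vectorsD(1)[OF c, of l] by (cases l) auto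
  have "3 * (l - 1) \<le> c l * (l - 1)" using \<open>\<not> c l \<le> 2\<close> by simp
  also have "\<dots> \<le> 2 * sum c {1..<l}" by (rule kunz_vector_subadditive_bound[OF c \<open>l < m\<close>])
  finally have "3 * (l - 1) \<le> 2 * sum c {1..<l}" .
  moreover have "m - Suc l \<le> sum c {Suc l..<m}"
    using card_le_sum_kunz_vector[OF c, of "{Suc l..<m}"] by simp
  moreover have "g = sum c {1..<l} + c l + sum c {Suc l..<m}"
    unfolding kunz_vectorsD(5)[OF c, symmetric] by (rule sum_split_at[OF \<open>1 \<le> l\<close> \<open>l < m\<close>])
  ultimately show False using assms \<open>\<not> c l \<le> 2\<close> \<open>1 \<le> l\<close> by linarith
qed

lemma kunz_vector_le_3:
  assumes c: "c \<in> kunz_vectors m g" and "g + 1 = m + K" "3 * K \<le> m" "l < m"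
  shows "c l \<le> 3"
proof (rule ccontr)
  assume "\<not> c l \<le> 3"
  then have "1 \<le> l" using kunz_vectorsD(1)[OF c, of l] by (cases l) auto
  have "4 * (l - 1) \<le> c l * (l - 1)" using \<open>\<not> c l \<le> 3\<close> by simp
  also have "\<dots> \<le> 2 * sum c {1..<l}" by (rule kunz_vector_subadditive_bound[OF c \<open>l < m\<close>])
  finally have "4 * (l - 1) \<le> 2 * sum c {1..<l}" .
  moreover have "3 * (m - Suc l) \<le> (c l - 1) * (m - Suc l)"
    using \<open>\<not> c l \<le> 3\<close> by (intro mult_right_mono) auto
  moreover have "(c l - 1) * (m - Suc l) \<le> 2 * sum c {Suc l..<m}"
    using \<open>1 \<le> l\<close> by (intro kunz_vector_wraparound_bound[OF c _ \<open>l < m\<close>]) simp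
  moreover have "g = sum c {1..<l} + c l + sum c {Suc l..<m}"
    unfolding kunz_vectorsD(5)[OF c, symmetric] by (rule sum_split_at[OF \<open>1 \<le> l\<close> \<open>l < m\<close>])
  ultimately show False using assms \<open>\<not> c l \<le> 3\<close> \<open>1 \<le> l\<close> by linarith
qed

section \<open>Counting Kunz vectors of small excess\<close>

definition avoids_113 :: "nat list \<Rightarrow> bool" where
  "avoids_113 xs \<longleftrightarrow> (\<forall>i1\<in>{1..length xs}. \<forall>i2\<in>{1..length xs}. \<forall>i3\<in>{1..length xs}.
     i1 + i2 = i3 \<longrightarrow> (xs ! (i1 - 1), xs ! (i2 - 1), xs ! (i3 - 1)) \<noteq> (1, 1, 3))"

definition Y_tuples :: "nat \<Rightarrow> nat \<Rightarrow> nat list set" where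
  "Y_tuples L K =
     {xs. length xs = L \<and> set xs \<subseteq> {1, 2, 3} \<and> avoids_113 xs \<and> a_cnt xs + 2 * b_cnt xs \<le> K}"

lemma Y_set_eq_Y_tuples:
  assumes "-1 \<le> k"
  shows "Y_set k = Y_tuples (nat (2 * k + 1)) (nat (k + 1))"
proof (cases "k = -1")
  case True
  then show ?thesis by (auto simp: Y_set_def Y_tuples_def avoids_113_def a_cnt_def b_cnt_def)
next
  case False
  then show ?thesis using assms unfolding Y_set_def Y_tuples_def avoids_113_def
    by (intro set_eqI) (auto simp del: of_nat_add simp add: of_nat_add[symmetric])
qed

lemma finite_Y_tuples: "finite (Y_tuples L K)"
proof (rule finite_subset)
  show "Y_tuples L K \<subseteq> {xs. set xs \<subseteq> {1, 2, 3} \<and> length xs = L}"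
    by (auto simp: Y_tuples_def)
  show "finite {xs. set xs \<subseteq> {1, 2, 3 :: nat} \<and> length xs = L}"
    by (rule finite_lists_length_eq) simp
qed

lemma sum_list_of_123:
  "set xs \<subseteq> {1, 2, 3} \<Longrightarrow> sum_list xs = length xs + a_cnt xs + 2 * b_cnt xs"
  by (induction xs) (auto simp: a_cnt_def b_cnt_def)

lemma sum_one_two_valued:
  assumes "finite A" "\<And>i. i \<in> A \<Longrightarrow> c i \<in> {1, 2 :: nat}"
  shows "sum c A = card A + card {i \<in> A. c i = 2}"
proof -
  have "sum c A = (\<Sum>i\<in>A. 1 + (if c i = 2 then 1 else 0))"
    using assms(2) by (intro sum.cong) auto
  also have "\<dots> = (\<Sum>i\<in>A. 1) + (\<Sum>i\<in>A. if c i = 2 then 1 else 0)"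
    by (rule sum.distrib)
  also have "(\<Sum>i\<in>A. if c i = 2 then 1 else 0) = (\<Sum>i\<in>{i \<in> A. c i = 2}. 1 :: nat)"
    by (rule sum.inter_filter[OF assms(1), symmetric])
  finally show ?thesis by simp
qed

definition kunz_prefix :: "nat \<Rightarrow> (nat \<Rightarrow> nat) \<Rightarrow> nat list" where
  "kunz_prefix L c = map c [1..<Suc L]"

definition twos_after :: "nat \<Rightarrow> nat \<Rightarrow> (nat \<Rightarrow> nat) \<Rightarrow> nat set" where
  "twos_after L m c = {i \<in> {Suc L..<m}. c i = 2}"

definition vector_of_tuple :: "nat \<Rightarrow> nat \<Rightarrow> nat list \<Rightarrow> nat set \<Rightarrow> nat \<Rightarrow> nat" where
  "vector_of_tuple L m xs T i =
     (if 1 \<le> i \<and> i \<le> L then xs ! (i - 1) else if L < i \<and> i < m then (if i \<in> T then 2 else 1) else 0)"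

lemma length_kunz_prefix [simp]: "length (kunz_prefix L c) = L"
  by (simp add: kunz_prefix_def)

lemma nth_kunz_prefix: "1 \<le> i \<Longrightarrow> i \<le> L \<Longrightarrow> kunz_prefix L c ! (i - 1) = c i"
  by (simp add: kunz_prefix_def del: upt_Suc)

lemma set_kunz_prefix: "set (kunz_prefix L c) = c ` {1..L}"
  by (simp add: kunz_prefix_def atLeastLessThanSuc_atLeastAtMost del: upt_Suc)

lemma sum_split_kunz_prefix:
  assumes "L < m"
  shows "sum c {1..<m} = sum_list (kunz_prefix L c) + sum c {Suc L..<m}"
proof -
  have "sum_list (kunz_prefix L c) = sum c {1..<Suc L}"
    unfolding kunz_prefix_def sum_set_upt_conv_sum_list_nat[symmetric] set_upt ..
  then show ?thesis using sum.atLeastLessThan_concat[of 1 "Suc L" m c] assms by simp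
qed

lemma avoids_113_kunz_prefix_iff:
  "avoids_113 (kunz_prefix L c) \<longleftrightarrow>
     (\<forall>i j. 1 \<le> i \<longrightarrow> 1 \<le> j \<longrightarrow> i + j \<le> L \<longrightarrow> (c i, c j, c (i + j)) \<noteq> (1, 1, 3))"
  unfolding avoids_113_def length_kunz_prefix
proof (intro iffI allI impI ballI)
  fix i j assume H: "\<forall>i1\<in>{1..L}. \<forall>i2\<in>{1..L}. \<forall>i3\<in>{1..L}. i1 + i2 = i3 \<longrightarrow>
      (kunz_prefix L c ! (i1 - 1), kunz_prefix L c ! (i2 - 1), kunz_prefix L c ! (i3 - 1)) \<noteq> (1, 1, 3)"
    and ij: "1 \<le> i" "1 \<le> j" "i + j \<le> L"
  then show "(c i, c j, c (i + j)) \<noteq> (1, 1, 3)"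
    using H[rule_format, of i j "i + j"] nth_kunz_prefix[of i L c] nth_kunz_prefix[of j L c]
      nth_kunz_prefix[of "i + j" L c]
    by auto
next
  fix i1 i2 i3
  assume "\<forall>i j. 1 \<le> i \<longrightarrow> 1 \<le> j \<longrightarrow> i + j \<le> L \<longrightarrow> (c i, c j, c (i + j)) \<noteq> (1, 1, 3)"
    and "i1 \<in> {1..L}" "i2 \<in> {1..L}" "i3 \<in> {1..L}" "i1 + i2 = i3"
  then show "(kunz_prefix L c ! (i1 - 1), kunz_prefix L c ! (i2 - 1), kunz_prefix L c ! (i3 - 1))
      \<noteq> (1, 1, 3)"
    using nth_kunz_prefix[of i1 L c] nth_kunz_prefix[of i2 L c] nth_kunz_prefix[of i3 L c] by auto
qed

lemma kunz_prefix_vector_of_tuple: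
  assumes "length xs = L"
  shows "kunz_prefix L (vector_of_tuple L m xs T) = xs"
proof (rule nth_equalityI)
  fix n assume "n < length (kunz_prefix L (vector_of_tuple L m xs T))"
  then show "kunz_prefix L (vector_of_tuple L m xs T) ! n = xs ! n"
    using nth_kunz_prefix[of "Suc n" L] by (simp add: vector_of_tuple_def)
qed (simp add: assms)

lemma twos_after_vector_of_tuple: "T \<subseteq> {Suc L..<m} \<Longrightarrow> twos_after L m (vector_of_tuple L m xs T) = T"
  by (auto simp: twos_after_def vector_of_tuple_def)

lemma sum_vector_of_tuple:
  assumes "L < m" "length xs = L" "set xs \<subseteq> {1, 2, 3}" "T \<subseteq> {Suc L..<m}"
  shows "sum (vector_of_tuple L m xs T) {1..<m} = L + a_cnt xs + 2 * b_cnt xs + (m - Suc L) + card T"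
proof -
  let ?c = "vector_of_tuple L m xs T"
  have "sum ?c {Suc L..<m} = (m - Suc L) + card (twos_after L m ?c)"
    unfolding twos_after_def by (subst sum_one_two_valued) (auto simp: vector_of_tuple_def)
  also have "twos_after L m ?c = T" by (rule twos_after_vector_of_tuple[OF assms(4)])
  finally show ?thesis
    using sum_split_kunz_prefix[OF assms(1), of ?c] kunz_prefix_vector_of_tuple[OF assms(2)]
      sum_list_of_123[OF assms(3)] assms(2)
    by simp
qed

lemma kunz_vectorsI_le_3:
  assumes zero: "\<And>i. i = 0 \<or> m \<le> i \<Longrightarrow> c i = 0"
    and range: "\<And>i. 1 \<le> i \<Longrightarrow> i < m \<Longrightarrow> c i \<in> {1, 2, 3}"
    and no_113: "\<And>i j. 1 \<le> i \<Longrightarrow> 1 \<le> j \<Longrightarrow> i + j < m \<Longrightarrow> (c i, c j, c (i + j)) \<noteq> (1, 1, 3)"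
    and "sum c {1..<m} = g"
  shows "c \<in> kunz_vectors m g"
  unfolding kunz_vectors_def
proof (intro CollectI conjI allI impI)
  fix i assume "1 \<le> i \<and> i < m"
  then show "1 \<le> c i" using range[of i] by auto
next
  fix i j :: nat assume ij: "1 \<le> i" "1 \<le> j" "i + j < m"
  then show "c (i + j) \<le> c i + c j"
    using range[of i] range[of j] range[of "i + j"] no_113[OF ij] by auto
next
  fix i j :: nat assume ij: "i < m" "j < m" "m < i + j"
  have "i + j - m < m" using ij by linarith
  then have "c (i + j - m) \<le> 3"
    using zero[of "i + j - m"] range[of "i + j - m"] by (cases "i + j - m = 0") auto
  moreover have "1 \<le> c i" "1 \<le> c j" using range[of i] range[of j] ij by auto
  ultimately show "c (i + j - m) \<le> c i + c j + 1" by linarith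
qed (use assms in auto)

locale small_excess =
  fixes m g K L :: nat
  assumes genus_eq: "g + 1 = m + K"
    and excess_le: "3 * K \<le> m"
    and prefix_length: "L = 2 * K - 1"
begin

lemma prefix_length_less: "L < m"
  using genus_eq excess_le prefix_length by (cases K) auto

lemma kunz_vector_after_prefix:
  assumes "c \<in> kunz_vectors m g" "L < i" "i < m"
  shows "c i \<in> {1, 2}"
proof -
  have "2 * K \<le> i" "1 \<le> i" using assms(2) prefix_length by auto
  then show ?thesis
    using kunz_vector_le_2[OF assms(1) genus_eq, of i] kunz_vectorsD(2)[OF assms(1), of i] assms(3)
    by auto
qed

lemma sum_kunz_vector_after_prefix:
  assumes "c \<in> kunz_vectors m g"
  shows "sum c {Suc L..<m} = (m - Suc L) + card (twos_after L m c)"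
  unfolding twos_after_def
  using kunz_vector_after_prefix[OF assms] by (subst sum_one_two_valued) auto

lemma set_kunz_prefix_subset:
  assumes c: "c \<in> kunz_vectors m g"
  shows "set (kunz_prefix L c) \<subseteq> {1, 2, 3}"
proof
  fix x assume "x \<in> set (kunz_prefix L c)"
  then obtain i where "1 \<le> i" "i \<le> L" "x = c i" by (auto simp: set_kunz_prefix)
  then show "x \<in> {1, 2, 3}"
    using kunz_vectorsD(2)[OF c, of i] kunz_vector_le_3[OF c genus_eq excess_le, of i]
      prefix_length_less
    by auto
qed

lemma excess_kunz_vector:
  assumes c: "c \<in> kunz_vectors m g"
  shows "a_cnt (kunz_prefix L c) + 2 * b_cnt (kunz_prefix L c) + card (twos_after L m c) = K"
proof -
  have "g = sum_list (kunz_prefix L c) + sum c {Suc L..<m}"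
    using sum_split_kunz_prefix[OF prefix_length_less, of c] kunz_vectorsD(5)[OF c] by simp
  moreover have "sum_list (kunz_prefix L c) = L + a_cnt (kunz_prefix L c) + 2 * b_cnt (kunz_prefix L c)"
    using sum_list_of_123[OF set_kunz_prefix_subset[OF c]] by simp
  moreover have "sum c {Suc L..<m} = (m - Suc L) + card (twos_after L m c)"
    by (rule sum_kunz_vector_after_prefix[OF c])
  ultimately show ?thesis using genus_eq prefix_length_less by linarith
qed

lemma kunz_prefix_in_Y_tuples:
  assumes c: "c \<in> kunz_vectors m g"
  shows "kunz_prefix L c \<in> Y_tuples L K"
proof -
  have "avoids_113 (kunz_prefix L c)"
    unfolding avoids_113_kunz_prefix_iff
    using kunz_vectorsD(3)[OF c] prefix_length_less by fastforce
  then show ?thesis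
    using set_kunz_prefix_subset[OF c] excess_kunz_vector[OF c] by (simp add: Y_tuples_def)
qed

lemma vector_of_tuple_in_kunz_vectors:
  assumes xs: "xs \<in> Y_tuples L K"
    and T: "T \<subseteq> {Suc L..<m}" "card T = K - a_cnt xs - 2 * b_cnt xs"
  shows "vector_of_tuple L m xs T \<in> kunz_vectors m g"
proof -
  let ?c = "vector_of_tuple L m xs T"
  have len: "length xs = L" and set: "set xs \<subseteq> {1, 2, 3}" and "avoids_113 xs"
    and ab: "a_cnt xs + 2 * b_cnt xs \<le> K"
    using xs by (simp_all add: Y_tuples_def)
  have prefix: "kunz_prefix L ?c = xs" by (rule kunz_prefix_vector_of_tuple[OF len])
  have range: "?c i \<in> {1, 2, 3}" if "1 \<le> i" "i < m" for i
  proof (cases "i \<le> L")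
    case True
    then have "xs ! (i - 1) \<in> set xs" using that len by (intro nth_mem) auto
    then show ?thesis using set True that by (auto simp: vector_of_tuple_def)
  qed (use that in \<open>auto simp: vector_of_tuple_def\<close>)
  show ?thesis
  proof (rule kunz_vectorsI_le_3)
    show "?c i = 0" if "i = 0 \<or> m \<le> i" for i
      using that prefix_length_less by (auto simp: vector_of_tuple_def)
    show "?c i \<in> {1, 2, 3}" if "1 \<le> i" "i < m" for i by (rule range[OF that])
    show "(?c i, ?c j, ?c (i + j)) \<noteq> (1, 1, 3)" if "1 \<le> i" "1 \<le> j" "i + j < m" for i j
    proof (cases "i + j \<le> L")
      case True
      then show ?thesis
        using \<open>avoids_113 xs\<close> that prefix avoids_113_kunz_prefix_iff[of L ?c] by simp
    next
      case False
      then show ?thesis by (auto simp: vector_of_tuple_def)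
    qed
    show "sum ?c {1..<m} = g"
      using sum_vector_of_tuple[OF prefix_length_less len set T(1)] T(2) ab genus_eq
        prefix_length_less
      by linarith
  qed
qed

lemma vector_of_tuple_kunz_prefix:
  assumes c: "c \<in> kunz_vectors m g"
  shows "vector_of_tuple L m (kunz_prefix L c) (twos_after L m c) = c"
proof
  fix i
  consider (prefix) "1 \<le> i" "i \<le> L" | (after) "L < i" "i < m" | (outside) "i = 0 \<or> m \<le> i"
    by linarith
  then show "vector_of_tuple L m (kunz_prefix L c) (twos_after L m c) i = c i"
  proof cases
    case prefix
    then show ?thesis using nth_kunz_prefix[OF prefix] by (simp add: vector_of_tuple_def)
  next
    case after
    then show ?thesis
      using kunz_vector_after_prefix[OF c after] by (auto simp: vector_of_tuple_def twos_after_def)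
  next
    case outside
    then show ?thesis
      using kunz_vectorsD(1)[OF c outside] prefix_length_less by (auto simp: vector_of_tuple_def)
  qed
qed

lemma card_kunz_vectors_with_prefix:
  assumes xs: "xs \<in> Y_tuples L K"
  shows "card {c \<in> kunz_vectors m g. kunz_prefix L c = xs} =
         (m - Suc L) choose (K - a_cnt xs - 2 * b_cnt xs)"
proof -
  let ?n = "K - a_cnt xs - 2 * b_cnt xs"
  have "bij_betw (twos_after L m) {c \<in> kunz_vectors m g. kunz_prefix L c = xs}
      {T. T \<subseteq> {Suc L..<m} \<and> card T = ?n}"
  proof (rule bij_betw_byWitness[where f' = "vector_of_tuple L m xs"])
    show "\<forall>c\<in>{c \<in> kunz_vectors m g. kunz_prefix L c = xs}.
        vector_of_tuple L m xs (twos_after L m c) = c"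
      using vector_of_tuple_kunz_prefix by blast
    show "\<forall>T\<in>{T. T \<subseteq> {Suc L..<m} \<and> card T = ?n}. twos_after L m (vector_of_tuple L m xs T) = T"
      using twos_after_vector_of_tuple by blast
    show "twos_after L m ` {c \<in> kunz_vectors m g. kunz_prefix L c = xs}
        \<subseteq> {T. T \<subseteq> {Suc L..<m} \<and> card T = ?n}"
      using excess_kunz_vector by (fastforce simp: twos_after_def)
    show "vector_of_tuple L m xs ` {T. T \<subseteq> {Suc L..<m} \<and> card T = ?n}
        \<subseteq> {c \<in> kunz_vectors m g. kunz_prefix L c = xs}"
      using xs vector_of_tuple_in_kunz_vectors kunz_prefix_vector_of_tuple
      by (auto simp: Y_tuples_def)
  qed
  then have "card {c \<in> kunz_vectors m g. kunz_prefix L c = xs} = card {T. T \<subseteq> {Suc L..<m} \<and> card T = ?n}"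
    by (rule bij_betw_same_card)
  also have "\<dots> = (m - Suc L) choose ?n" by (simp add: n_subsets)
  finally show ?thesis .
qed

lemma finite_kunz_vectors: "finite (kunz_vectors m g)"
proof (rule finite_surj)
  show "finite (Y_tuples L K \<times> Pow {Suc L..<m})" using finite_Y_tuples by simp
  show "kunz_vectors m g \<subseteq> (\<lambda>(xs, T). vector_of_tuple L m xs T) ` (Y_tuples L K \<times> Pow {Suc L..<m})"
  proof
    fix c assume c: "c \<in> kunz_vectors m g"
    have "(kunz_prefix L c, twos_after L m c) \<in> Y_tuples L K \<times> Pow {Suc L..<m}"
      using kunz_prefix_in_Y_tuples[OF c] by (auto simp: twos_after_def)
    with vector_of_tuple_kunz_prefix[OF c]
    show "c \<in> (\<lambda>(xs, T). vector_of_tuple L m xs T) ` (Y_tuples L K \<times> Pow {Suc L..<m})"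
      by (metis (no_types, lifting) case_prod_conv image_eqI)
  qed
qed

lemma card_kunz_vectors:
  "card (kunz_vectors m g) = (\<Sum>xs\<in>Y_tuples L K. (m - Suc L) choose (K - a_cnt xs - 2 * b_cnt xs))"
proof -
  have "card (kunz_vectors m g) =
      card (\<Union>xs\<in>Y_tuples L K. {c \<in> kunz_vectors m g. kunz_prefix L c = xs})"
    using kunz_prefix_in_Y_tuples by (intro arg_cong[where f = card]) blast
  also have "\<dots> = (\<Sum>xs\<in>Y_tuples L K. card {c \<in> kunz_vectors m g. kunz_prefix L c = xs})"
    by (rule card_UN_disjoint) (use finite_Y_tuples finite_kunz_vectors in auto)
  also have "\<dots> = (\<Sum>xs\<in>Y_tuples L K. (m - Suc L) choose (K - a_cnt xs - 2 * b_cnt xs))"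
    using card_kunz_vectors_with_prefix by simp
  finally show ?thesis .
qed

end

lemma sum_Y_set_eq_sum_Y_tuples:
  assumes "-1 \<le> k" and K: "int K = k + 1" and genus: "g + 1 = m + K"
  shows "(\<Sum>xs\<in>Y_set k. nat (int g - 3 * k - 2) choose
            nat (k + 1 - int (a_cnt xs) - 2 * int (b_cnt xs))) =
         (\<Sum>xs\<in>Y_tuples (2 * K - 1) K. (m - Suc (2 * K - 1)) choose (K - a_cnt xs - 2 * b_cnt xs))"
proof -
  have "nat (2 * k + 1) = 2 * K - 1" "nat (k + 1) = K" using assms(1) K by linarith+
  then have "Y_set k = Y_tuples (2 * K - 1) K" using Y_set_eq_Y_tuples[OF assms(1)] by simp
  moreover have "nat (int g - 3 * k - 2) choose nat (k + 1 - int (a_cnt xs) - 2 * int (b_cnt xs)) =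
      (m - Suc (2 * K - 1)) choose (K - a_cnt xs - 2 * b_cnt xs)" for xs
  proof (cases "K = 0")
    case True
    \<comment> \<open>for \<open>k = -1\<close> the bases \<open>g + 1\<close> and \<open>g\<close> differ, but both binomials are \<open>_ choose 0\<close>\<close>
    then show ?thesis using K by simp
  next
    case False
    then have "nat (int g - 3 * k - 2) = m - Suc (2 * K - 1)" using genus K by linarith
    moreover have "nat (k + 1 - int (a_cnt xs) - 2 * int (b_cnt xs)) = K - a_cnt xs - 2 * b_cnt xs"
      using K by linarith
    ultimately show ?thesis by simp
  qed
  ultimately show ?thesis by simp
qed

theorem theorem8p9:
  fixes k :: int and g :: nat
  assumes "k \<ge> -1" and "int g \<ge> 4 * k + 3"
  shows "card {S \<in> semigroups_of_genus g. int (multiplicity_ns S) = int g - k} =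
         (\<Sum>xs\<in>Y_set k. nat (int g - 3 * k - 2) choose
                          nat (k + 1 - int (a_cnt xs) - 2 * int (b_cnt xs)))"
proof -
  define K where "K = nat (k + 1)"
  define m where "m = g + 1 - K"
  have K: "int K = k + 1" using assms(1) by (simp add: K_def)
  interpret small_excess m g K "2 * K - 1"
    by unfold_locales (use assms K in \<open>auto simp: m_def\<close>)
  have "{S \<in> semigroups_of_genus g. int (multiplicity_ns S) = int g - k} =
      {S \<in> semigroups_of_genus g. multiplicity_ns S = m}"
    using genus_eq K by auto
  then have "card {S \<in> semigroups_of_genus g. int (multiplicity_ns S) = int g - k} =
      card (kunz_vectors m g)"
    using card_semigroups_with_multiplicity prefix_length_less by simp
  also have "\<dots> = (\<Sum>xs\<in>Y_tuples (2 * K - 1) K.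
      (m - Suc (2 * K - 1)) choose (K - a_cnt xs - 2 * b_cnt xs))"
    by (rule card_kunz_vectors)
  also have "\<dots> = (\<Sum>xs\<in>Y_set k. nat (int g - 3 * k - 2) choose
                          nat (k + 1 - int (a_cnt xs) - 2 * int (b_cnt xs)))"
    using sum_Y_set_eq_sum_Y_tuples[OF assms(1) K genus_eq] by simp
  finally show ?thesis .
qed

end
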